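(* Consider an asynchronous shared-memory system of $n$ processes in which up to $t$ processes may crash, with $n > 2t$. For every integer $k > \frac{n-t}{n-2t}$, algorithm $\mathcal{A}_3$ (described in the context) solves $k$-set agreement.
   Context: $k$-set agreement (decisions allowed in $V\cup\{\bot\}$, $\bot$ counting as a decided value): each process proposes an initial value from a set $V$; (Validity) if all correct processes propose the same value $v$, no correct process decides a value different from $v$; (Agreement) at most $k$ distinct values are decided by correct processes; (Termination) every correct process eventually decides. A crashed process stops taking steps; a correct process never crashes. Model: processes communicate through an atomic snapshot object $S$ with one entry per process (initially all $\bot$), supporting $\mathrm{update}(m)$ (process $p_i$ writes $m$ into its own entry) and $\mathrm{snapshot}()$ (returns the vector of all entries), both atomic (linearizable) and wait-free. Asynchronous: no timing bounds. Algorithm $\mathcal{A}_3$, code of $p_i$ with initial value $m$: $p_i$ performs $S.\mathrm{update}(m)$, then repeatedly calls $L_i := S.\mathrm{snapshot}()$ until $L_i$ has at least $n-t$ non-$\bot$ entries; it sets $X_i := L_i$ and $x_i :=$ number of non-$\bot$ entries of $X_i$. If at least $x_i - t$ entries of $X_i$ equal $m$, it decides $m$; else, if some value $v$ has at least $x_i - t$ entries in $X_i$ equal to it, it decides such a $v$; else it decides $\bot$. *)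

theory Defs
  imports Main "HOL.Real"
begin

text \<open>An entry of the snapshot object
 is None (bottom) or Some m. Every atomic step of a process is either its update,
 one snapshot (followed by the purely local decision computation), or a no-op once
 it has decided.\<close>

datatype 'v phase = Init | Scanning | Decided "'v option"

record 'v a3_cfg =
  mem :: "nat \<Rightarrow> 'v option"
  pc  :: "nat \<Rightarrow> 'v phase"

definition a3_init :: "'v a3_cfg" where
  "a3_init = \<lparr>mem = (\<lambda>_. None), pc = (\<lambda>_. Init)\<rparr>"

definition nonbot :: "nat \<Rightarrow> (nat \<Rightarrow> 'v option) \<Rightarrow> nat" where
  "nonbot n L = card {j \<in> {..<n}. L j \<noteq> None}"

definition cnt :: "nat \<Rightarrow> (nat \<Rightarrow> 'v option) \<Rightarrow> 'v \<Rightarrow> nat" where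
  "cnt n L v = card {j \<in> {..<n}. L j = Some v}"

text \<open>Decision rule of A3 given own value m and the snapshot X; d = None is bottom.
 The choice of "such a v" is nondeterministic.\<close>
definition a3_decide :: "nat \<Rightarrow> nat \<Rightarrow> 'v \<Rightarrow> (nat \<Rightarrow> 'v option) \<Rightarrow> 'v option \<Rightarrow> bool" where
  "a3_decide n t m X d =
    (let x = nonbot n X in
      if cnt n X m \<ge> x - t then d = Some m
      else if (\<exists>v. cnt n X v \<ge> x - t) then (\<exists>v. d = Some v \<and> cnt n X v \<ge> x - t)
      else d = None)"

definition a3_step :: "nat \<Rightarrow> nat \<Rightarrow> (nat \<Rightarrow> 'v) \<Rightarrow> nat \<Rightarrow> 'v a3_cfg \<Rightarrow> 'v a3_cfg \<Rightarrow> bool" where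
  "a3_step n t inp i c c' =
    ((pc c i = Init \<and> c' = c\<lparr>mem := (mem c)(i := Some (inp i)), pc := (pc c)(i := Scanning)\<rparr>)
   \<or> (pc c i = Scanning \<and> nonbot n (mem c) < n - t \<and> c' = c)
   \<or> (pc c i = Scanning \<and> nonbot n (mem c) \<ge> n - t \<and>
        (\<exists>d. a3_decide n t (inp i) (mem c) d \<and> c' = c\<lparr>pc := (pc c)(i := Decided d)\<rparr>))
   \<or> (\<exists>d. pc c i = Decided d \<and> c' = c))"

text \<open>An execution: schedule sched (process taking step s), configurations cfg,
 set C of correct processes.\<close>
definition a3_run :: "nat \<Rightarrow> nat \<Rightarrow> (nat \<Rightarrow> 'v) \<Rightarrow> (nat \<Rightarrow> nat) \<Rightarrow> nat set \<Rightarrow> (nat \<Rightarrow> 'v a3_cfg) \<Rightarrow> bool" where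
  "a3_run n t inp sched C cfg =
    (cfg 0 = a3_init
     \<and> (\<forall>s. sched s < n \<and> a3_step n t inp (sched s) (cfg s) (cfg (Suc s)))
     \<and> C \<subseteq> {..<n} \<and> card ({..<n} - C) \<le> t
     \<and> (\<forall>i\<in>C. \<forall>s. \<exists>s'\<ge>s. sched s' = i)
     \<and> (\<forall>i\<in>{..<n} - C. finite {s. sched s = i}))"

definition a3_decided :: "(nat \<Rightarrow> 'v a3_cfg) \<Rightarrow> nat \<Rightarrow> 'v option \<Rightarrow> bool" where
  "a3_decided cfg i d = (\<exists>s. pc (cfg s) i = Decided d)"

definition k_set_agreement :: "nat \<Rightarrow> (nat \<Rightarrow> 'v) \<Rightarrow> nat set \<Rightarrow> (nat \<Rightarrow> 'v a3_cfg) \<Rightarrow> bool" where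
  "k_set_agreement k inp C cfg =
    ((\<forall>v. (\<forall>i\<in>C. inp i = v) \<longrightarrow> (\<forall>i\<in>C. \<forall>d. a3_decided cfg i d \<longrightarrow> d = Some v))
     \<and> finite {d. \<exists>i\<in>C. a3_decided cfg i d}
     \<and> card {d. \<exists>i\<in>C. a3_decided cfg i d} \<le> k
     \<and> (\<forall>i\<in>C. \<exists>d. a3_decided cfg i d))"

definition a3_solves_k_set_agreement :: "nat \<Rightarrow> nat \<Rightarrow> nat \<Rightarrow> 'v itself \<Rightarrow> bool" where
  "a3_solves_k_set_agreement n t k _ =
    (\<forall>(inp :: nat \<Rightarrow> 'v) sched C cfg. a3_run n t inp sched C cfg \<longrightarrow> k_set_agreement k inp C cfg)"

end

theory Submission
  imports Defs
begin

text \<open>Snapshot entries are only ever written once, so the snapshots taken in a run grow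
  monotonically. Let \<open>X\<^sub>0\<close> be the first snapshot with at least \<open>n - t\<close> entries. A decided
  value \<open>v\<close> has at least \<open>x - t\<close> copies in the (later) snapshot \<open>X\<close> its decider saw, and
  passing from \<open>X\<^sub>0\<close> to \<open>X\<close> adds at most \<open>x - x\<^sub>0\<close> entries, so \<open>v\<close> already has at least
  \<open>x\<^sub>0 - t\<close> copies in \<open>X\<^sub>0\<close>. Hence \<open>p\<close> distinct decided values satisfy
  \<open>p (x\<^sub>0 - t) \<le> x\<^sub>0\<close>, i.e. \<open>p \<le> x\<^sub>0 / (x\<^sub>0 - t) \<le> (n - t) / (n - 2t) < k\<close>, and together
  with \<open>\<bottom>\<close> at most \<open>k\<close> values are decided.\<close>

definition supported :: "nat \<Rightarrow> nat \<Rightarrow> (nat \<Rightarrow> 'v option) \<Rightarrow> 'v \<Rightarrow> bool" where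
  "supported n t X v \<longleftrightarrow> nonbot n X - t \<le> cnt n X v"

lemma a3_decide_Some_supported:
  "a3_decide n t m X (Some v) \<Longrightarrow> supported n t X v"
  unfolding a3_decide_def supported_def Let_def by (auto split: if_splits)

lemma a3_decide_own_supported:
  "a3_decide n t m X d \<Longrightarrow> supported n t X m \<Longrightarrow> d = Some m"
  unfolding a3_decide_def supported_def Let_def by auto

lemma nonbot_map_le: "X \<subseteq>\<^sub>m Y \<Longrightarrow> nonbot n X \<le> nonbot n Y"
  unfolding nonbot_def map_le_def by (rule card_mono) (auto simp: dom_def)

lemma cnt_gain_le_nonbot_gain:
  assumes "X \<subseteq>\<^sub>m Y"
  shows "cnt n Y v + nonbot n X \<le> cnt n X v + nonbot n Y"
proof -
  define A where "A = {j \<in> {..<n}. X j = Some v}"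
  define B where "B = {j \<in> {..<n}. Y j = Some v}"
  define N where "N = {j \<in> {..<n}. X j \<noteq> None}"
  define M where "M = {j \<in> {..<n}. Y j \<noteq> None}"
  have "N \<subseteq> M" "B \<subseteq> A \<union> (M - N)"
    using assms unfolding A_def B_def N_def M_def map_le_def dom_def by force+
  moreover have "finite A" "finite M" unfolding A_def M_def by auto
  ultimately have "card B \<le> card (A \<union> (M - N))" "card N \<le> card M"
    "card (M - N) = card M - card N"
    by (auto intro: card_mono simp: card_Diff_subset finite_subset)
  moreover have "card (A \<union> (M - N)) \<le> card A + card (M - N)" by (rule card_Un_le)
  ultimately show ?thesis unfolding cnt_def nonbot_def A_def B_def N_def M_def by linarith
qed

lemma supported_map_le:
  assumes "X \<subseteq>\<^sub>m Y" and "supported n t Y v"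
  shows "supported n t X v"
  using assms cnt_gain_le_nonbot_gain[OF assms(1), of n v] nonbot_map_le[OF assms(1), of n]
  unfolding supported_def by linarith

lemma sum_cnt_le_nonbot:
  assumes "finite D"
  shows "(\<Sum>v\<in>D. cnt n X v) \<le> nonbot n X"
proof -
  have "(\<Sum>v\<in>D. cnt n X v) = card (\<Union>v\<in>D. {j \<in> {..<n}. X j = Some v})"
    unfolding cnt_def using assms by (subst card_UN_disjoint) auto
  also have "\<dots> \<le> nonbot n X" unfolding nonbot_def by (rule card_mono) auto
  finally show ?thesis .
qed

lemma finite_supported:
  assumes "t < nonbot n X"
  shows "finite {v. supported n t X v}"
proof (rule finite_subset)
  show "{v. supported n t X v} \<subseteq> (\<lambda>j. the (X j)) ` {..<n}"
  proof
    fix v assume "v \<in> {v. supported n t X v}"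
    then have "0 < cnt n X v" using assms unfolding supported_def by simp
    then show "v \<in> (\<lambda>j. the (X j)) ` {..<n}" by (force simp: cnt_def card_gt_0_iff)
  qed
qed simp

lemma card_supported_mult_le:
  "card {v. supported n t X v} * (nonbot n X - t) \<le> nonbot n X"
proof (cases "nonbot n X \<le> t")
  case False
  let ?S = "{v. supported n t X v}"
  have "card ?S * (nonbot n X - t) = (\<Sum>v\<in>?S. nonbot n X - t)" by simp
  also have "\<dots> \<le> (\<Sum>v\<in>?S. cnt n X v)" by (rule sum_mono) (simp add: supported_def)
  also have "\<dots> \<le> nonbot n X" using False by (intro sum_cnt_le_nonbot finite_supported) simp
  finally show ?thesis .
qed simp

text \<open>The bound \<open>p \<le> x / (x - t)\<close> is weakest for the smallest admissible \<open>x = n - t\<close>.\<close>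

lemma quorum_multiplicity_less:
  fixes n t k p x :: nat
  assumes "n > 2 * t" and k: "real k > (real n - real t) / (real n - 2 * real t)"
    and "n - t \<le> x" and "p * (x - t) \<le> x"
  shows "p < k"
proof -
  have pos: "real n - 2 * real t > 0" and x: "real n - real t \<le> real x" "real t \<le> real x"
    using assms(1,3) by linarith+
  have "real p * (real x - real t) \<le> real x"
    using assms(4) x(2) by (metis of_nat_diff of_nat_le_iff of_nat_mult)
  then have "(real p - 1) * real x \<le> real p * real t" by (simp add: algebra_simps)
  moreover have "(real p - 1) * (real n - real t) \<le> (real p - 1) * real x" if "p \<noteq> 0"
    using that x(1) by (intro mult_left_mono) auto
  ultimately have "real p * (real n - 2 * real t) \<le> real n - real t"
    using pos by (cases "p = 0") (auto simp: algebra_simps)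
  then have "real p \<le> (real n - real t) / (real n - 2 * real t)"
    using pos by (simp add: pos_le_divide_eq)
  then show ?thesis using k by linarith
qed

lemma card_supported_less:
  fixes n t k :: nat
  assumes "n > 2 * t" and "real k > (real n - real t) / (real n - 2 * real t)"
    and "n - t \<le> nonbot n X"
  shows "card {v. supported n t X v} < k"
  using quorum_multiplicity_less[OF assms card_supported_mult_le] .

lemma a3_step_mem:
  "a3_step n t inp i c c' \<Longrightarrow>
    mem c' = (if pc c i = Init then (mem c)(i := Some (inp i)) else mem c)"
  unfolding a3_step_def by auto

lemma a3_step_pc_other: "a3_step n t inp i c c' \<Longrightarrow> j \<noteq> i \<Longrightarrow> pc c' j = pc c j"
  unfolding a3_step_def by auto

lemma a3_step_pc_self:
  assumes "a3_step n t inp i c c'"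
  obtains "pc c i = Init" "pc c' i = Scanning"
  | "pc c i = Scanning" "pc c' i = Scanning" "nonbot n (mem c) < n - t"
  | d where "pc c i = Scanning" "n - t \<le> nonbot n (mem c)" "a3_decide n t (inp i) (mem c) d"
      "pc c' i = Decided d"
  | d where "pc c i = Decided d" "pc c' i = Decided d"
  using assms unfolding a3_step_def by auto

definition first_quorum :: "nat \<Rightarrow> nat \<Rightarrow> (nat \<Rightarrow> 'v a3_cfg) \<Rightarrow> nat" where
  "first_quorum n t cfg = (LEAST s. n - t \<le> nonbot n (mem (cfg s)))"

context
  fixes n t :: nat and inp :: "nat \<Rightarrow> 'v" and sched C and cfg :: "nat \<Rightarrow> 'v a3_cfg"
  assumes run: "a3_run n t inp sched C cfg"
begin

lemma run_step: "a3_step n t inp (sched s) (cfg s) (cfg (Suc s))"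
  using run unfolding a3_run_def by auto

lemma run_mem_eq_inp: "mem (cfg s) j = Some a \<Longrightarrow> a = inp j"
proof (induction s)
  case 0
  then show ?case using run unfolding a3_run_def a3_init_def by simp
next
  case (Suc s)
  then show ?case using a3_step_mem[OF run_step] by (auto split: if_splits)
qed

lemma run_mem_mono:
  assumes "s \<le> s'"
  shows "mem (cfg s) \<subseteq>\<^sub>m mem (cfg s')"
  using assms
proof (induction s' rule: dec_induct)
  case (step s')
  have "mem (cfg s') \<subseteq>\<^sub>m mem (cfg (Suc s'))"
    using a3_step_mem[OF run_step, of s'] run_mem_eq_inp[of s' "sched s'"]
    by (auto simp: map_le_def)
  with step.IH show ?case by (rule map_le_trans)
qed simp

lemma run_started_mono:
  assumes "pc (cfg s) j \<noteq> Init" and "s \<le> s'"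
  shows "pc (cfg s') j \<noteq> Init"
  using assms(2)
proof (induction s' rule: dec_induct)
  case (step s')
  show ?case
  proof (cases "j = sched s'")
    case True
    show ?thesis by (rule a3_step_pc_self[OF run_step, of s']) (use step.IH True in auto)
  qed (use step.IH in \<open>simp add: a3_step_pc_other[OF run_step]\<close>)
qed (fact assms(1))

lemma run_started_mem: "pc (cfg s) j \<noteq> Init \<Longrightarrow> mem (cfg s) j \<noteq> None"
proof (induction s)
  case 0
  then show ?case using run unfolding a3_run_def a3_init_def by simp
next
  case (Suc s)
  then show ?case
    by (cases "j = sched s")
      (auto elim: a3_step_pc_self[OF run_step]
        simp: a3_step_mem[OF run_step] a3_step_pc_other[OF run_step])
qed

lemma run_decided_snapshot:
  "pc (cfg s) j = Decided d \<Longrightarrow>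
    \<exists>s'. n - t \<le> nonbot n (mem (cfg s')) \<and> a3_decide n t (inp j) (mem (cfg s')) d"
proof (induction s)
  case 0
  then show ?case using run unfolding a3_run_def a3_init_def by simp
next
  case (Suc s)
  show ?case
  proof (cases "j = sched s")
    case True
    show ?thesis by (rule a3_step_pc_self[OF run_step, of s]) (use Suc True in auto)
  qed (use Suc in \<open>simp add: a3_step_pc_other[OF run_step]\<close>)
qed

lemma run_started_after_step: "pc (cfg (Suc s)) (sched s) \<noteq> Init"
  by (rule a3_step_pc_self[OF run_step, of s]) auto

lemma run_quorum_reached:
  obtains S where "n - t \<le> nonbot n (mem (cfg S))" and "\<forall>j\<in>C. pc (cfg S) j \<noteq> Init"
proof -
  have C: "C \<subseteq> {..<n}" "card ({..<n} - C) \<le> t" "\<forall>j\<in>C. \<exists>s. sched s = j"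
    using run unfolding a3_run_def by blast+
  then obtain f where f: "\<forall>j\<in>C. sched (f j) = j" by metis
  have "finite C" using C(1) finite_subset by blast
  define S where "S = Suc (Max (f ` C))"
  have started: "\<forall>j\<in>C. pc (cfg S) j \<noteq> Init"
  proof
    fix j assume "j \<in> C"
    then have "pc (cfg (Suc (f j))) j \<noteq> Init" and "Suc (f j) \<le> S"
      using run_started_after_step[of "f j"] f \<open>finite C\<close> unfolding S_def by auto
    then show "pc (cfg S) j \<noteq> Init" by (rule run_started_mono)
  qed
  then have "card C \<le> nonbot n (mem (cfg S))"
    unfolding nonbot_def using C(1) run_started_mem by (intro card_mono) auto
  moreover have "card ({..<n} - C) = n - card C"
    using C(1) \<open>finite C\<close> by (simp add: card_Diff_subset)
  ultimately have "n - t \<le> nonbot n (mem (cfg S))" using C(2) by linarith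
  then show ?thesis using started by (rule that)
qed

lemma run_termination:
  assumes "i \<in> C"
  shows "\<exists>d. a3_decided cfg i d"
proof -
  obtain S where quorum: "n - t \<le> nonbot n (mem (cfg S))"
    and started: "\<forall>j\<in>C. pc (cfg S) j \<noteq> Init"
    by (rule run_quorum_reached)
  obtain s where "S \<le> s" and "sched s = i"
    using run assms unfolding a3_run_def by blast
  have "pc (cfg s) i \<noteq> Init"
    using run_started_mono started assms \<open>S \<le> s\<close> by blast
  moreover have "n - t \<le> nonbot n (mem (cfg s))"
    using quorum nonbot_map_le[OF run_mem_mono[OF \<open>S \<le> s\<close>]] by (rule order.trans)
  ultimately have "\<exists>d. pc (cfg (Suc s)) i = Decided d \<or> pc (cfg s) i = Decided d"
    by - (rule a3_step_pc_self[OF run_step, of s], use \<open>sched s = i\<close> in auto)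
  then show ?thesis unfolding a3_decided_def by blast
qed

text \<open>When all correct processes propose \<open>v\<close>, only the at most \<open>t\<close> faulty ones can
  contribute entries other than \<open>v\<close>.\<close>

lemma run_unanimous_supported:
  assumes "\<forall>i\<in>C. inp i = v"
  shows "supported n t (mem (cfg s)) v"
proof -
  let ?X = "mem (cfg s)"
  have C: "C \<subseteq> {..<n}" "card ({..<n} - C) \<le> t" using run unfolding a3_run_def by auto
  have "{j \<in> {..<n}. ?X j \<noteq> None} \<subseteq> {j \<in> {..<n}. ?X j = Some v} \<union> ({..<n} - C)"
    using assms run_mem_eq_inp by fastforce
  then have "nonbot n ?X \<le> card ({j \<in> {..<n}. ?X j = Some v} \<union> ({..<n} - C))"
    unfolding nonbot_def by (intro card_mono) auto
  also have "\<dots> \<le> cnt n ?X v + card ({..<n} - C)" unfolding cnt_def by (rule card_Un_le)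
  finally show ?thesis using C(2) unfolding supported_def by linarith
qed

lemma run_validity:
  assumes "\<forall>i\<in>C. inp i = v" and "i \<in> C" and "a3_decided cfg i d"
  shows "d = Some v"
proof -
  obtain s where "a3_decide n t (inp i) (mem (cfg s)) d"
    using assms(3) run_decided_snapshot unfolding a3_decided_def by blast
  with assms(1,2) show ?thesis
    using a3_decide_own_supported run_unanimous_supported[OF assms(1)] by metis
qed

lemma run_decided_supported_first_quorum:
  assumes "a3_decided cfg i (Some v)"
  shows "supported n t (mem (cfg (first_quorum n t cfg))) v"
proof -
  obtain s where quorum: "n - t \<le> nonbot n (mem (cfg s))"
    and dec: "a3_decide n t (inp i) (mem (cfg s)) (Some v)"
    using assms run_decided_snapshot unfolding a3_decided_def by blast
  have "first_quorum n t cfg \<le> s"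
    unfolding first_quorum_def using quorum by (rule Least_le)
  then show ?thesis
    by (rule supported_map_le[OF run_mem_mono a3_decide_Some_supported[OF dec]])
qed

lemma run_agreement:
  assumes "n > 2 * t" and "real k > (real n - real t) / (real n - 2 * real t)"
  shows "finite {d. \<exists>i\<in>C. a3_decided cfg i d}" and "card {d. \<exists>i\<in>C. a3_decided cfg i d} \<le> k"
proof -
  let ?X = "mem (cfg (first_quorum n t cfg))"
  let ?S = "{v. supported n t ?X v}"
  have "n - t \<le> nonbot n ?X"
    unfolding first_quorum_def by (rule LeastI_ex) (metis run_quorum_reached)
  then have "finite ?S" and "card ?S < k"
    using assms by (auto intro: finite_supported card_supported_less)
  moreover have "{d. \<exists>i\<in>C. a3_decided cfg i d} \<subseteq> insert None (Some ` ?S)"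
  proof
    fix d assume "d \<in> {d. \<exists>i\<in>C. a3_decided cfg i d}"
    then show "d \<in> insert None (Some ` ?S)"
      by (cases d) (auto dest: run_decided_supported_first_quorum)
  qed
  moreover have "card (insert None (Some ` ?S)) = Suc (card ?S)"
    using \<open>finite ?S\<close> by (simp add: card_image)
  ultimately show "finite {d. \<exists>i\<in>C. a3_decided cfg i d}"
    and "card {d. \<exists>i\<in>C. a3_decided cfg i d} \<le> k"
    using card_mono[of "insert None (Some ` ?S)" "{d. \<exists>i\<in>C. a3_decided cfg i d}"]
    by (auto intro: finite_subset)
qed

end

theorem theorem6:
  fixes n t k :: nat
  assumes "n > 2 * t"
    and "real k > (real n - real t) / (real n - 2 * real t)"
  shows "a3_solves_k_set_agreement n t k TYPE('v)"
  unfolding a3_solves_k_set_agreement_def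
proof (intro allI impI)
  fix inp :: "nat \<Rightarrow> 'v" and sched C cfg
  assume run: "a3_run n t inp sched C cfg"
  show "k_set_agreement k inp C cfg"
    unfolding k_set_agreement_def
    using run_validity[OF run] run_agreement[OF run assms] run_termination[OF run] by blast
qed

end
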